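(* Let $\gamma_X=(X,d_X)$ and $\gamma_Y=(Y,d_Y)$ be two dynamic metric spaces and let $\delta>0$. Then for every $X'\subseteq X$ there exists $Y'\subseteq Y$ with $|Y'|\le|X'|$ and $d_{\mathrm{dyn}}(\gamma_{X'},\gamma_{Y'})\le d_{\mathrm{dyn}}(\gamma_X,\gamma_Y)+\delta$.
   Context: A dynamic metric space $\gamma_X=(X,d_X(\cdot))$ is a finite set $X$ with $d_X:\mathbb{R}\times X\times X\to\mathbb{R}_{\ge0}$ such that each $d_X(t)$ is a pseudometric and each $t\mapsto d_X(t)(x,x')$ is continuous; for $X'\subseteq X$, $\gamma_{X'}=(X',d_X|_{X'})$. A tripod between sets $X,Y$ is a set $Z$ with surjections $\varphi_X:Z\to X$, $\varphi_Y:Z\to Y$. It is a $(2,\varepsilon)$-tripod if for all $t\in\mathbb{R}$ and $z,z'\in Z$: $\min_{t'\in[t-\varepsilon,t+\varepsilon]}d_X(t')(\varphi_Xz,\varphi_Xz')\le d_Y(t)(\varphi_Yz,\varphi_Yz')+2\varepsilon$ and $\min_{t'\in[t-\varepsilon,t+\varepsilon]}d_Y(t')(\varphi_Yz,\varphi_Yz')\le d_X(t)(\varphi_Xz,\varphi_Xz')+2\varepsilon$. The distortion of a tripod is the infimum of $\varepsilon>0$ for which it is a $(2,\varepsilon)$-tripod, and $d_{\mathrm{dyn}}(\gamma_X,\gamma_Y)$ is the infimum of distortions over all tripods between $X$ and $Y$. *)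

theory Defs
  imports "HOL-Analysis.Analysis" "HOL-Library.Extended_Real"
begin

definition pseudometric_on :: "'a set \<Rightarrow> ('a \<Rightarrow> 'a \<Rightarrow> real) \<Rightarrow> bool" where
  "pseudometric_on X d \<longleftrightarrow>
     (\<forall>x\<in>X. d x x = 0) \<and>
     (\<forall>x\<in>X. \<forall>y\<in>X. d x y \<ge> 0 \<and> d x y = d y x) \<and>
     (\<forall>x\<in>X. \<forall>y\<in>X. \<forall>z\<in>X. d x z \<le> d x y + d y z)"

definition dyn_metric_space :: "'a set \<Rightarrow> (real \<Rightarrow> 'a \<Rightarrow> 'a \<Rightarrow> real) \<Rightarrow> bool" where
  "dyn_metric_space X d \<longleftrightarrow> finite X \<and>
     (\<forall>t. pseudometric_on X (d t)) \<and>
     (\<forall>x\<in>X. \<forall>x'\<in>X. continuous_on UNIV (\<lambda>t. d t x x'))"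

definition tripod :: "'a set \<Rightarrow> 'b set \<Rightarrow> 'z set \<Rightarrow> ('z \<Rightarrow> 'a) \<Rightarrow> ('z \<Rightarrow> 'b) \<Rightarrow> bool" where
  "tripod X Y Z fX fY \<longleftrightarrow> fX ` Z = X \<and> fY ` Z = Y"

text \<open>Minimum of d(t') over t' in [t-e, t+e] (attained by continuity).\<close>
definition win_min :: "(real \<Rightarrow> 'a \<Rightarrow> 'a \<Rightarrow> real) \<Rightarrow> real \<Rightarrow> real \<Rightarrow> 'a \<Rightarrow> 'a \<Rightarrow> real" where
  "win_min d e t x x' = Inf ((\<lambda>t'. d t' x x') ` {t - e .. t + e})"

definition is_2eps_tripod ::
  "(real \<Rightarrow> 'a \<Rightarrow> 'a \<Rightarrow> real) \<Rightarrow> (real \<Rightarrow> 'b \<Rightarrow> 'b \<Rightarrow> real) \<Rightarrow>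
   'z set \<Rightarrow> ('z \<Rightarrow> 'a) \<Rightarrow> ('z \<Rightarrow> 'b) \<Rightarrow> real \<Rightarrow> bool" where
  "is_2eps_tripod dX dY Z fX fY e \<longleftrightarrow>
     (\<forall>t. \<forall>z\<in>Z. \<forall>z'\<in>Z.
        win_min dX e t (fX z) (fX z') \<le> dY t (fY z) (fY z') + 2 * e \<and>
        win_min dY e t (fY z) (fY z') \<le> dX t (fX z) (fX z') + 2 * e)"

text \<open>Distortion: infimum of \<epsilon> > 0 for which the tripod is a (2,\<epsilon>)-tripod
  (in the extended reals, \<infinity> if there is none).\<close>
definition distortion ::
  "(real \<Rightarrow> 'a \<Rightarrow> 'a \<Rightarrow> real) \<Rightarrow> (real \<Rightarrow> 'b \<Rightarrow> 'b \<Rightarrow> real) \<Rightarrow>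
   'z set \<Rightarrow> ('z \<Rightarrow> 'a) \<Rightarrow> ('z \<Rightarrow> 'b) \<Rightarrow> ereal" where
  "distortion dX dY Z fX fY = Inf {ereal e | e. e > 0 \<and> is_2eps_tripod dX dY Z fX fY e}"

text \<open>Tripods are taken with parameter set Z \<subseteq> X \<times> Y and
  the coordinate projections; every tripod (Z, fX, fY) has the same distortion as
  its image {(fX z, fY z) | z \<in> Z} with the projections, so this infimum equals
  the infimum over all tripods.\<close>
definition d_dyn ::
  "'a set \<Rightarrow> (real \<Rightarrow> 'a \<Rightarrow> 'a \<Rightarrow> real) \<Rightarrow> 'b set \<Rightarrow> (real \<Rightarrow> 'b \<Rightarrow> 'b \<Rightarrow> real) \<Rightarrow> ereal" where
  "d_dyn X dX Y dY = Inf {distortion dX dY Z fst snd | Z. Z \<subseteq> X \<times> Y \<and> tripod X Y Z fst snd}"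

end

theory Submission
  imports Defs
begin

text \<open>Take a tripod Z between X and Y of distortion below d_dyn X Y + \<delta> and keep a
  single pair (x, y) \<in> Z for each x \<in> X'.  The second coordinates of the kept pairs
  form Y', with at most |X'| points, and the kept pairs form a tripod between X' and Y'
  of distortion at most that of Z, since the (2,\<epsilon>)-conditions pass to subsets.\<close>

lemma distortion_nonneg: "0 \<le> distortion dX dY Z fX fY"
  unfolding distortion_def by (rule Inf_greatest) auto

lemma d_dyn_nonneg: "0 \<le> d_dyn X dX Y dY"
  unfolding d_dyn_def by (rule Inf_greatest) (auto simp: distortion_nonneg)

lemma is_2eps_tripod_subset:
  "is_2eps_tripod dX dY Z fX fY e \<Longrightarrow> Z' \<subseteq> Z \<Longrightarrow> is_2eps_tripod dX dY Z' fX fY e"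
  unfolding is_2eps_tripod_def by blast

lemma distortion_mono:
  "Z' \<subseteq> Z \<Longrightarrow> distortion dX dY Z' fX fY \<le> distortion dX dY Z fX fY"
  unfolding distortion_def by (rule Inf_superset_mono) (auto intro: is_2eps_tripod_subset)

lemma d_dyn_image_le_distortion:
  "d_dyn (fst ` Z) dX (snd ` Z) dY \<le> distortion dX dY Z fst snd"
  unfolding d_dyn_def tripod_def by (rule Inf_lower) force

lemma subset_image_obtain_section:
  assumes "B \<subseteq> f ` A"
  obtains A' where "A' \<subseteq> A" "bij_betw f A' B"
proof
  show "inv_into A f ` B \<subseteq> A"
    using assms by (auto intro: inv_into_into)
  show "bij_betw f (inv_into A f ` B) B"
  proof (rule bij_betw_imageI)
    show "inj_on f (inv_into A f ` B)"
      using assms by (auto simp: inj_on_def f_inv_into_f subset_eq)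
    show "f ` inv_into A f ` B = B"
      using refl assms by (rule image_inv_into_cancel)
  qed
qed

lemma d_dyn_approx_by_tripod:
  assumes "d_dyn X dX Y dY < c"
  obtains Z where "Z \<subseteq> X \<times> Y" "tripod X Y Z fst snd" "distortion dX dY Z fst snd < c"
  using assms unfolding d_dyn_def by (auto simp: Inf_less_iff)

theorem mainTheorem12:
  fixes X :: "'a set" and dX :: "real \<Rightarrow> 'a \<Rightarrow> 'a \<Rightarrow> real"
    and Y :: "'b set" and dY :: "real \<Rightarrow> 'b \<Rightarrow> 'b \<Rightarrow> real"
    and \<delta> :: real and X' :: "'a set"
  assumes "dyn_metric_space X dX" and "dyn_metric_space Y dY"
    and "\<delta> > 0" and "X' \<subseteq> X"
  shows "\<exists>Y'. Y' \<subseteq> Y \<and> card Y' \<le> card X' \<and>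
           d_dyn X' dX Y' dY \<le> d_dyn X dX Y dY + ereal \<delta>"
proof (cases "d_dyn X dX Y dY = \<infinity>")
  case True
  then show ?thesis by (intro exI[of _ "{}"]) auto
next
  case False
  with d_dyn_nonneg[of X dX Y dY] \<open>\<delta> > 0\<close> have "d_dyn X dX Y dY < d_dyn X dX Y dY + ereal \<delta>"
    by (cases "d_dyn X dX Y dY") auto
  then obtain Z where Z: "Z \<subseteq> X \<times> Y" "tripod X Y Z fst snd"
    and dist_Z: "distortion dX dY Z fst snd < d_dyn X dX Y dY + ereal \<delta>"
    by (rule d_dyn_approx_by_tripod)
  from Z(2) \<open>X' \<subseteq> X\<close> have "X' \<subseteq> fst ` Z" by (simp add: tripod_def)
  then obtain Z' where Z': "Z' \<subseteq> Z" "bij_betw fst Z' X'"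
    by (rule subset_image_obtain_section)
  have "finite X'"
    using \<open>dyn_metric_space X dX\<close> \<open>X' \<subseteq> X\<close> by (auto simp: dyn_metric_space_def intro: finite_subset)
  with Z'(2) have "finite Z'" and "card Z' = card X'"
    by (simp_all add: bij_betw_finite bij_betw_same_card)
  have "snd ` Z' \<subseteq> Y" using Z(1) Z'(1) by auto
  moreover have "card (snd ` Z') \<le> card X'"
    using card_image_le[OF \<open>finite Z'\<close>] \<open>card Z' = card X'\<close> by simp
  moreover have "d_dyn X' dX (snd ` Z') dY \<le> distortion dX dY Z fst snd"
  proof -
    have "fst ` Z' = X'" using Z'(2) by (simp add: bij_betw_def)
    then have "d_dyn X' dX (snd ` Z') dY \<le> distortion dX dY Z' fst snd"
      using d_dyn_image_le_distortion by metis
    also have "\<dots> \<le> distortion dX dY Z fst snd"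
      using Z'(1) by (rule distortion_mono)
    finally show ?thesis .
  qed
  ultimately show ?thesis
    using dist_Z by (intro exI[of _ "snd ` Z'"]) auto
qed

end
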